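(* Let $G$ be a connected graph of order $n$, minimum degree $\delta \geq 3$ and maximum degree $\Delta$, and let $N = n-\Delta+\delta$. Then \[ \mu(G) \leq \frac{N(N-1)}{n(n-1)}\cdot \frac{n+2\Delta}{\delta+1} + 4 . \] Equivalently, $W(G) \le \binom{N}{2}\frac{n+2\Delta}{\delta+1} + 2n(n-1)$.
   Context: For a connected graph $G$ with vertex set $V(G)$, $d_G(u,v)$ denotes the usual shortest-path distance. The Wiener index is $W(G)=\sum_{\{u,v\}\subseteq V(G)} d_G(u,v)$ (sum over unordered pairs of distinct vertices), and the average distance of a connected graph of order $n\ge 2$ is $\mu(G)=\binom{n}{2}^{-1}W(G)$. *)

theory Defs
  imports Complex_Main
begin

definition simple_graph :: "'a set \<Rightarrow> ('a \<Rightarrow> 'a \<Rightarrow> bool) \<Rightarrow> bool" where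
  "simple_graph V E \<longleftrightarrow> finite V \<and> (\<forall>u v. E u v \<longrightarrow> u \<in> V \<and> v \<in> V)
     \<and> (\<forall>u v. E u v \<longrightarrow> E v u) \<and> (\<forall>v. \<not> E v v)"

definition is_walk :: "('a \<Rightarrow> 'a \<Rightarrow> bool) \<Rightarrow> 'a list \<Rightarrow> bool" where
  "is_walk E xs \<longleftrightarrow> xs \<noteq> [] \<and> (\<forall>i. Suc i < length xs \<longrightarrow> E (xs ! i) (xs ! Suc i))"

definition walk_betw :: "('a \<Rightarrow> 'a \<Rightarrow> bool) \<Rightarrow> 'a \<Rightarrow> 'a \<Rightarrow> nat \<Rightarrow> bool" where
  "walk_betw E u v k \<longleftrightarrow> (\<exists>xs. is_walk E xs \<and> hd xs = u \<and> last xs = v \<and> length xs = Suc k)"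

definition connected_graph :: "'a set \<Rightarrow> ('a \<Rightarrow> 'a \<Rightarrow> bool) \<Rightarrow> bool" where
  "connected_graph V E \<longleftrightarrow> V \<noteq> {} \<and> (\<forall>u\<in>V. \<forall>v\<in>V. \<exists>k. walk_betw E u v k)"

definition gdist :: "('a \<Rightarrow> 'a \<Rightarrow> bool) \<Rightarrow> 'a \<Rightarrow> 'a \<Rightarrow> nat" where
  "gdist E u v = (LEAST k. walk_betw E u v k)"

definition degree :: "'a set \<Rightarrow> ('a \<Rightarrow> 'a \<Rightarrow> bool) \<Rightarrow> 'a \<Rightarrow> nat" where
  "degree V E v = card {w \<in> V. E v w}"

definition min_degree :: "'a set \<Rightarrow> ('a \<Rightarrow> 'a \<Rightarrow> bool) \<Rightarrow> nat" where
  "min_degree V E = Min (degree V E ` V)"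

definition max_degree :: "'a set \<Rightarrow> ('a \<Rightarrow> 'a \<Rightarrow> bool) \<Rightarrow> nat" where
  "max_degree V E = Max (degree V E ` V)"

definition wiener :: "'a set \<Rightarrow> ('a \<Rightarrow> 'a \<Rightarrow> bool) \<Rightarrow> real" where
  "wiener V E = (\<Sum>u\<in>V. \<Sum>v\<in>V - {u}. real (gdist E u v)) / 2"

definition avg_dist :: "'a set \<Rightarrow> ('a \<Rightarrow> 'a \<Rightarrow> bool) \<Rightarrow> real" where
  "avg_dist V E = wiener V E / real (card V choose 2)"

end

theory Submission
  imports Defs
begin

text \<open>Fix a vertex \<open>w\<close> of maximum degree and choose centres \<open>S \<ni> w\<close> at pairwise distance at
  least 3 such that every vertex \<open>v\<close> has a centre within distance 2 that is no farther from \<open>w\<close>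
  than \<open>v\<close>. Assigning every vertex to a nearest centre partitions the graph into clusters; the
  cluster of \<open>s\<close> contains the closed neighbourhood of \<open>s\<close>, so it has at least \<open>\<delta> + 1\<close>
  vertices, and at least \<open>\<Delta> + 1\<close> for \<open>s = w\<close>. Joining centres at distance at most 3 gives a
  connected cluster graph in which every centre other than \<open>w\<close> has a neighbour closer to \<open>w\<close>,
  and \<open>d(x, y) \<le> 4 + 3 d'(c x, c y)\<close> for the centres \<open>c x, c y\<close> of \<open>x, y\<close>.

  The Wiener index of the cluster graph, weighted by cluster sizes, is bounded by removing a centre
  farthest from \<open>w\<close> at a time. Every distance level from the removed centre is occupied by a
  cluster of size at least \<open>\<delta> + 1\<close>, and one of them has size at least \<open>\<Delta> + 1\<close>; this caps
  its weighted distance sum by a quadratic in the remaining weight. Summing these quadratics is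
  dominated by a cubic potential, and comparing the potential at \<open>n\<close> and \<open>\<Delta> + 1\<close> gives the
  bound \<open>N(N - 1)(n + 2\<Delta>)/(\<delta> + 1)\<close> on three times the cluster contribution.\<close>

section \<open>Walks and distances\<close>

lemma walk_betw_0: "walk_betw E u v 0 \<longleftrightarrow> u = v"
proof
  assume "walk_betw E u v 0"
  then obtain xs where "hd xs = u" "last xs = v" "length xs = 1"
    unfolding walk_betw_def by auto
  then show "u = v" by (cases xs) auto
next
  assume "u = v"
  then show "walk_betw E u v 0"
    unfolding walk_betw_def is_walk_def by (intro exI[of _ "[u]"]) auto
qed

lemma walk_betw_Suc: "walk_betw E u v (Suc k) \<longleftrightarrow> (\<exists>x. E u x \<and> walk_betw E x v k)"
proof
  assume "walk_betw E u v (Suc k)"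
  then obtain xs where xs: "is_walk E xs" "hd xs = u" "last xs = v" "length xs = Suc (Suc k)"
    unfolding walk_betw_def by auto
  then obtain ys where ys: "xs = u # ys" "ys \<noteq> []" by (cases xs) fastforce+
  have "E u (hd ys)" using xs(1) ys unfolding is_walk_def
    by (metis Suc_less_eq hd_conv_nth length_Cons length_greater_0_conv nth_Cons_0 nth_Cons_Suc)
  moreover have "is_walk E ys" using xs(1) ys unfolding is_walk_def
    by (metis Suc_less_eq length_Cons nth_Cons_Suc)
  ultimately show "\<exists>x. E u x \<and> walk_betw E x v k"
    using xs ys unfolding walk_betw_def by auto
next
  assume "\<exists>x. E u x \<and> walk_betw E x v k"
  then obtain ys where ys: "E u (hd ys)" "is_walk E ys" "last ys = v" "length ys = Suc k"
    unfolding walk_betw_def by auto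
  have "is_walk E (u # ys)" unfolding is_walk_def
  proof (intro conjI allI impI)
    fix i assume i: "Suc i < length (u # ys)"
    show "E ((u # ys) ! i) ((u # ys) ! Suc i)"
    proof (cases i)
      case 0 then show ?thesis using ys by (metis hd_conv_nth length_greater_0_conv nth_Cons_0 nth_Cons_Suc zero_less_Suc)
    next
      case (Suc j) then show ?thesis using ys(2) i unfolding is_walk_def by auto
    qed
  qed simp
  then show "walk_betw E u v (Suc k)" unfolding walk_betw_def using ys
    by (intro exI[of _ "u # ys"]) auto
qed

lemma walk_betw_edge: "E u v \<Longrightarrow> walk_betw E u v 1"
  by (simp add: walk_betw_Suc walk_betw_0)

lemma walk_betw_trans:
  "walk_betw E u v a \<Longrightarrow> walk_betw E v x b \<Longrightarrow> walk_betw E u x (a + b)"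
  by (induction a arbitrary: u) (auto simp: walk_betw_0 walk_betw_Suc)

lemma walk_betw_split:
  "walk_betw E u v d \<Longrightarrow> j \<le> d \<Longrightarrow> \<exists>y. walk_betw E u y j \<and> walk_betw E y v (d - j)"
proof (induction j arbitrary: u d)
  case 0 then show ?case by (auto simp: walk_betw_0)
next
  case (Suc j)
  then obtain d' where d: "d = Suc d'" by (cases d) auto
  with Suc.prems obtain x where "E u x" "walk_betw E x v d'" by (auto simp: walk_betw_Suc)
  with Suc.IH[of x d'] Suc.prems d show ?case by (auto simp: walk_betw_Suc)
qed

lemma walk_betw_last_edge: "walk_betw E u y (Suc j) \<Longrightarrow> \<exists>x. E x y"
  using walk_betw_split[of E u y "Suc j" j] by (auto simp: walk_betw_Suc walk_betw_0)

lemma walk_betw_sym: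
  assumes "\<And>x y. E x y \<Longrightarrow> E y x"
  shows "walk_betw E u v k \<Longrightarrow> walk_betw E v u k"
proof (induction k arbitrary: u)
  case 0 then show ?case by (simp add: walk_betw_0)
next
  case (Suc k)
  then obtain x where "E u x" "walk_betw E v x k" by (auto simp: walk_betw_Suc)
  then show ?case using assms walk_betw_trans walk_betw_edge by fastforce
qed

lemma walk_betw_mono:
  assumes "\<And>x y. E1 x y \<Longrightarrow> E2 x y"
  shows "walk_betw E1 u v k \<Longrightarrow> walk_betw E2 u v k"
  by (induction k arbitrary: u) (use assms in \<open>auto simp: walk_betw_0 walk_betw_Suc\<close>)

lemma gdist_le: "walk_betw E u v k \<Longrightarrow> gdist E u v \<le> k"
  unfolding gdist_def by (rule Least_le)

lemma walk_betw_gdist: "walk_betw E u v k \<Longrightarrow> walk_betw E u v (gdist E u v)"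
  unfolding gdist_def by (rule LeastI)

lemma gdist_self [simp]: "gdist E u u = 0"
  using gdist_le[of E u u 0] by (simp add: walk_betw_0)

lemma gdist_eq_0D: "walk_betw E u v k \<Longrightarrow> gdist E u v = 0 \<Longrightarrow> u = v"
  using walk_betw_gdist[of E u v k] by (simp add: walk_betw_0)

lemma gdist_edge_le: "E u v \<Longrightarrow> gdist E u v \<le> 1"
  using gdist_le walk_betw_edge by metis

lemma gdist_triangle:
  assumes "walk_betw E u v a" "walk_betw E v x b"
  shows "gdist E u x \<le> gdist E u v + gdist E v x"
  using gdist_le[OF walk_betw_trans[OF walk_betw_gdist[OF assms(1)] walk_betw_gdist[OF assms(2)]]] .

lemma gdist_sym:
  assumes "\<And>x y. E x y \<Longrightarrow> E y x"
  shows "gdist E u v = gdist E v u"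
proof -
  have "walk_betw E u v = walk_betw E v u" using walk_betw_sym[of E, OF assms] by blast
  then show ?thesis unfolding gdist_def by simp
qed

lemma gdist_antimono:
  assumes "\<And>x y. E1 x y \<Longrightarrow> E2 x y" "walk_betw E1 u v k"
  shows "gdist E2 u v \<le> gdist E1 u v"
  using gdist_le[OF walk_betw_mono[OF assms(1) walk_betw_gdist[OF assms(2)]]] .

lemma exists_at_gdist:
  assumes "walk_betw E u v k" "j \<le> gdist E u v"
  shows "\<exists>y. gdist E u y = j \<and> walk_betw E u y j"
proof -
  let ?d = "gdist E u v"
  obtain y where y: "walk_betw E u y j" "walk_betw E y v (?d - j)"
    using walk_betw_split[OF walk_betw_gdist[OF assms(1)] assms(2)] by blast
  have "?d \<le> gdist E u y + (?d - j)"
    using gdist_le[OF walk_betw_trans[OF walk_betw_gdist[OF y(1)] y(2)]] .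
  then have "gdist E u y = j" using gdist_le[OF y(1)] assms(2) by linarith
  then show ?thesis using y by blast
qed

section \<open>Weighted distance sums\<close>

definition dist_sum_bound :: "real \<Rightarrow> real \<Rightarrow> real \<Rightarrow> real" where
  "dist_sum_bound m M X = (X - M + m) * (X + M) / (2 * m)"

lemma sum_atLeastAtMost_diff: "(\<Sum>k=1..D. real (D - k)) = real D * (real D - 1) / 2"
proof (induction D)
  case 0 then show ?case by simp
next
  case (Suc D)
  have "(\<Sum>k=1..D. real (Suc D - k)) = (\<Sum>k=1..D. real (D - k) + 1)"
    by (rule sum.cong) (auto simp: Suc_diff_le)
  then have "(\<Sum>k=1..Suc D. real (Suc D - k)) = real D * (real D - 1) / 2 + real D"
    using Suc by (simp add: sum.distrib)
  then show ?case by (simp add: field_simps)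
qed

lemma linear_minus_triangular_le_dist_sum_bound:
  assumes X: "X \<ge> (real D - 1) * m + M" and "m > 0" "M \<ge> m"
  shows "X * real D - m * (real D * (real D - 1) / 2) \<le> dist_sum_bound m M X"
proof -
  define Y where "Y = X - M + m - m * real D"
  have "Y \<ge> 0" using X unfolding Y_def by (simp add: algebra_simps)
  have "2 * m * (dist_sum_bound m M X - (X * real D - m * (real D * (real D - 1) / 2)))
      = Y\<^sup>2 + (2 * M - m) * Y"
    unfolding dist_sum_bound_def Y_def using \<open>m > 0\<close>
    by (simp add: field_simps power2_eq_square)
  also have "\<dots> \<ge> 0" using \<open>Y \<ge> 0\<close> assms by simp
  finally show ?thesis using \<open>m > 0\<close> by (simp add: zero_le_mult_iff)
qed

lemma level_representatives:
  fixes f :: "'b \<Rightarrow> nat"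
  assumes "finite P" "h \<in> P" "\<And>t. t \<in> P \<Longrightarrow> f t \<ge> 1"
    and levels: "\<And>t k. t \<in> P \<Longrightarrow> 1 \<le> k \<Longrightarrow> k \<le> f t \<Longrightarrow> \<exists>t'\<in>P. f t' = k"
  shows "\<exists>U\<subseteq>P. h \<in> U \<and> bij_betw f U {1..Max (f ` P)}"
proof -
  define D where "D = Max (f ` P)"
  have "D \<in> f ` P" unfolding D_def using assms(1,2) by (intro Max_in) auto
  then have level: "\<exists>t. t \<in> P \<and> f t = k" if "k \<in> {1..D}" for k using levels that by auto
  define u where "u k = (if k = f h then h else SOME t. t \<in> P \<and> f t = k)" for k
  have u: "u k \<in> P \<and> f (u k) = k" if "k \<in> {1..D}" for k
  proof (cases "k = f h")
    case False then show ?thesis using someI_ex[OF level[OF that]] by (simp add: u_def)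
  qed (simp add: u_def assms(2))
  have "f h \<in> {1..D}" unfolding D_def using assms(1-3) by auto
  moreover have "u (f h) = h" unfolding u_def by simp
  ultimately have hU: "h \<in> u ` {1..D}" by (metis rev_image_eqI)
  have "bij_betw f (u ` {1..D}) {1..D}"
    by (rule bij_betw_byWitness[where f' = u]) (use u in auto)
  moreover have "u ` {1..D} \<subseteq> P" using u by blast
  ultimately show ?thesis using hU unfolding D_def by blast
qed

lemma weighted_level_sum_le:
  fixes f :: "'b \<Rightarrow> nat"
  assumes fin: "finite P" and hP: "h \<in> P" and cm: "\<And>t. t \<in> P \<Longrightarrow> c t \<ge> m"
    and cM: "c h \<ge> M" and m0: "m > 0" and Mm: "M \<ge> m"
    and f1: "\<And>t. t \<in> P \<Longrightarrow> f t \<ge> 1"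
    and levels: "\<And>t k. t \<in> P \<Longrightarrow> 1 \<le> k \<Longrightarrow> k \<le> f t \<Longrightarrow> \<exists>t'\<in>P. f t' = k"
  shows "(\<Sum>t\<in>P. c t * real (f t)) \<le> dist_sum_bound m M (\<Sum>t\<in>P. c t)"
proof -
  define D where "D = Max (f ` P)"
  have "\<exists>U\<subseteq>P. h \<in> U \<and> bij_betw f U {1..D}"
    unfolding D_def by (rule level_representatives[OF fin hP f1 levels])
  then obtain U where UP: "U \<subseteq> P" and hU: "h \<in> U" and bij: "bij_betw f U {1..D}" by blast
  have finU: "finite U" using fin UP finite_subset by blast
  have fD: "f t \<le> D" if "t \<in> P" for t by (simp add: D_def fin that)
  have c0: "c t \<ge> 0" if "t \<in> P" for t using cm[OF that] m0 by linarith
  have "card U = D" using bij_betw_same_card[OF bij] by simp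
  then have "D \<ge> 1" using finU hU by (metis One_nat_def Suc_leI card_gt_0_iff empty_iff)
  have "(\<Sum>t\<in>U-{h}. m) \<le> (\<Sum>t\<in>U-{h}. c t)" using cm UP by (intro sum_mono) auto
  then have "(real D - 1) * m + M \<le> (\<Sum>t\<in>U. c t)"
    using sum.remove[OF finU hU, of c] cM \<open>card U = D\<close> \<open>D \<ge> 1\<close> finU hU by (simp add: of_nat_diff)
  also have "\<dots> \<le> (\<Sum>t\<in>P. c t)" by (rule sum_mono2[OF fin UP]) (use c0 in auto)
  finally have X: "(real D - 1) * m + M \<le> (\<Sum>t\<in>P. c t)" .
  have "m * (real D * (real D - 1) / 2) = (\<Sum>k=1..D. m * real (D - k))"
    by (simp only: sum_distrib_left[symmetric] sum_atLeastAtMost_diff)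
  also have "\<dots> = (\<Sum>t\<in>U. m * real (D - f t))"
    using sum.reindex_bij_betw[OF bij, of "\<lambda>k. m * real (D - k)"] by simp
  also have "\<dots> \<le> (\<Sum>t\<in>U. c t * (real D - real (f t)))"
  proof (rule sum_mono)
    fix t assume "t \<in> U"
    then have "m \<le> c t" "f t \<le> D" using cm fD UP by auto
    then show "m * real (D - f t) \<le> c t * (real D - real (f t))"
      by (simp add: of_nat_diff mult_right_mono)
  qed
  also have "\<dots> \<le> (\<Sum>t\<in>P. c t * (real D - real (f t)))"
    using c0 fD by (intro sum_mono2[OF fin UP]) auto
  also have "\<dots> = (\<Sum>t\<in>P. c t) * real D - (\<Sum>t\<in>P. c t * real (f t))"
    by (simp add: sum_distrib_right sum_subtractf right_diff_distrib)
  finally show ?thesis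
    using linear_minus_triangular_le_dist_sum_bound[OF X m0 Mm] by linarith
qed

text \<open>Up to the lower-order terms \<open>- x^2/4 - m*x/6\<close>, this is an antiderivative of
  \<open>dist_sum_bound m M\<close>, which is why its increments dominate the weighted distance sums.\<close>
definition wiener_potential :: "real \<Rightarrow> real \<Rightarrow> real \<Rightarrow> real" where
  "wiener_potential m M x = (x^3/3 + m*x^2/2 + (m*M - M^2)*x)/(2*m) - x^2/4 - m*x/6"

lemma wiener_potential_increment:
  assumes "X \<ge> 0" "c \<ge> m" "m > 0"
  shows "c * dist_sum_bound m M X \<le> wiener_potential m M (X + c) - wiener_potential m M X"
proof -
  have "wiener_potential m M (X + c) - wiener_potential m M X - c * dist_sum_bound m M X
      = X*c*(c-m)/(2*m) + c*(c-m)*(c+m)/(6*m)"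
    unfolding wiener_potential_def dist_sum_bound_def using assms(3)
    by (simp add: field_simps power2_eq_square power3_eq_cube)
  moreover have "X*c*(c-m)/(2*m) \<ge> 0" "c*(c-m)*(c+m)/(6*m) \<ge> 0" using assms by simp_all
  ultimately show ?thesis by linarith
qed

lemma wiener_potential_le:
  assumes "y \<ge> M" "M \<ge> m" "m > 0"
  shows "wiener_potential m M M \<le> wiener_potential m M y"
proof -
  define t where "t = y - M"
  have "t \<ge> 0" using assms t_def by simp
  have "2 * m * (wiener_potential m M y - wiener_potential m M M)
      = M*t^2 + t^3/3 + m*(M - m)*t + 2*m^2*t/3"
    unfolding wiener_potential_def t_def using assms(3)
    by (simp add: field_simps power2_eq_square power3_eq_cube)
  also have "\<dots> \<ge> 0" using \<open>t \<ge> 0\<close> assms by simp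
  finally show ?thesis using assms(3) by (simp add: zero_le_mult_iff)
qed

definition induced_rel :: "('a \<Rightarrow> 'a \<Rightarrow> bool) \<Rightarrow> 'a set \<Rightarrow> 'a \<Rightarrow> 'a \<Rightarrow> bool" where
  "induced_rel F T a b \<longleftrightarrow> F a b \<and> a \<in> T \<and> b \<in> T"

definition down_closed :: "'a set \<Rightarrow> ('a \<Rightarrow> nat) \<Rightarrow> 'a set \<Rightarrow> bool" where
  "down_closed S r T \<longleftrightarrow> (\<forall>s\<in>T. \<forall>s'\<in>S. r s' < r s \<longrightarrow> s' \<in> T)"

lemma induced_rel_sym: "(\<And>x y. F x y \<Longrightarrow> F y x) \<Longrightarrow> induced_rel F T a b \<Longrightarrow> induced_rel F T b a"
  unfolding induced_rel_def by blast

lemma down_closed_Diff_max: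
  assumes "down_closed S r T" "\<And>s. s \<in> T \<Longrightarrow> r s \<le> r v"
  shows "down_closed S r (T - {v})"
  using assms unfolding down_closed_def by (metis Diff_iff leD singletonD)

lemma walk_betw_induced_rel:
  assumes F_sym: "\<And>x y. F x y \<Longrightarrow> F y x"
    and parent: "\<And>s. s \<in> S \<Longrightarrow> s \<noteq> w \<Longrightarrow> \<exists>s'\<in>S. F s s' \<and> r s' < r s"
    and "T \<subseteq> S" "w \<in> T" "down_closed S r T" "s \<in> T" "t \<in> T"
  shows "\<exists>k. walk_betw (induced_rel F T) s t k"
proof -
  have from_root: "\<exists>k. walk_betw (induced_rel F T) w t k" if "t \<in> T" for t
    using that
  proof (induction "r t" arbitrary: t rule: less_induct)
    case less
    show ?case
    proof (cases "t = w")
      case True then show ?thesis using walk_betw_0 by metis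
    next
      case False
      then obtain s' where s': "s' \<in> S" "F t s'" "r s' < r t" using parent less.prems assms(3) by blast
      then have "s' \<in> T" using assms(5) less.prems unfolding down_closed_def by blast
      then obtain k where "walk_betw (induced_rel F T) w s' k" using less s' by blast
      moreover have "induced_rel F T s' t"
        using s' \<open>s' \<in> T\<close> less.prems F_sym unfolding induced_rel_def by blast
      ultimately show ?thesis using walk_betw_trans walk_betw_edge by metis
    qed
  qed
  obtain a b where "walk_betw (induced_rel F T) w s a" "walk_betw (induced_rel F T) w t b"
    using from_root assms(6,7) by blast
  then show ?thesis
    using walk_betw_sym[of "induced_rel F T"] induced_rel_sym[of F T] F_sym walk_betw_trans by metis
qed

text \<open>Along a shortest walk every distance level from \<open>v\<close> up to the eccentricity of \<open>v\<close>
  is occupied, which is what \<open>weighted_level_sum_le\<close> needs.\<close>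
lemma weighted_dist_sum_le:
  fixes G :: "'a \<Rightarrow> 'a \<Rightarrow> bool"
  assumes "finite T" "v \<in> T" "h \<in> T" "h \<noteq> v"
    and closed: "\<And>x y. G x y \<Longrightarrow> y \<in> T"
    and reach: "\<And>t. t \<in> T \<Longrightarrow> \<exists>k. walk_betw G v t k"
    and cm: "\<And>t. t \<in> T \<Longrightarrow> c t \<ge> m" and "c h \<ge> M" "m > 0" "M \<ge> m"
  shows "(\<Sum>t\<in>T-{v}. c t * real (gdist G v t)) \<le> dist_sum_bound m M (\<Sum>t\<in>T-{v}. c t)"
proof (rule weighted_level_sum_le)
  fix t assume t: "t \<in> T - {v}"
  then obtain k where k: "walk_betw G v t k" using reach by blast
  then show "1 \<le> gdist G v t" using gdist_eq_0D[OF k] t by (cases "gdist G v t") auto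
  fix j assume j: "1 \<le> j" "j \<le> gdist G v t"
  obtain y where y: "gdist G v y = j" "walk_betw G v y j" using exists_at_gdist[OF k j(2)] by blast
  obtain i where "j = Suc i" using j(1) by (cases j) auto
  then have "y \<in> T" using walk_betw_last_edge y(2) closed by metis
  moreover have "y \<noteq> v" using y(1) j(1) by auto
  ultimately show "\<exists>t'\<in>T-{v}. gdist G v t' = j" using y(1) by blast
qed (use assms in auto)

lemma double_sum_remove:
  fixes q :: "'a \<Rightarrow> 'a \<Rightarrow> real"
  assumes "finite T" "v \<in> T" "\<And>s t. q s t = q t s" "q v v = 0"
  shows "(\<Sum>s\<in>T. \<Sum>t\<in>T. q s t) = (\<Sum>s\<in>T-{v}. \<Sum>t\<in>T-{v}. q s t) + 2 * (\<Sum>t\<in>T-{v}. q v t)"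
proof -
  have "(\<Sum>s\<in>T. \<Sum>t\<in>T. q s t) = (\<Sum>s\<in>T. q s v + (\<Sum>t\<in>T-{v}. q s t))"
    by (rule sum.cong) (auto simp: sum.remove[OF assms(1,2)])
  also have "\<dots> = (\<Sum>s\<in>T. q s v) + (\<Sum>s\<in>T. \<Sum>t\<in>T-{v}. q s t)" by (simp add: sum.distrib)
  also have "(\<Sum>s\<in>T. q s v) = q v v + (\<Sum>s\<in>T-{v}. q s v)" by (simp add: sum.remove[OF assms(1,2)])
  also have "(\<Sum>s\<in>T. \<Sum>t\<in>T-{v}. q s t) = (\<Sum>t\<in>T-{v}. q v t) + (\<Sum>s\<in>T-{v}. \<Sum>t\<in>T-{v}. q s t)"
    by (simp add: sum.remove[OF assms(1,2)])
  also have "(\<Sum>s\<in>T-{v}. q s v) = (\<Sum>t\<in>T-{v}. q v t)" using assms(3) by simp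
  finally show ?thesis using assms(4) by linarith
qed

text \<open>Removing an element of maximal rank keeps \<open>T\<close> down-closed, hence connected, and its
  weighted distance sum is paid for by the increment of the potential.\<close>
lemma weighted_wiener_le_potential:
  fixes F :: "'a \<Rightarrow> 'a \<Rightarrow> bool" and c :: "'a \<Rightarrow> real"
  assumes F_sym: "\<And>x y. F x y \<Longrightarrow> F y x"
    and parent: "\<And>s. s \<in> S \<Longrightarrow> s \<noteq> w \<Longrightarrow> \<exists>s'\<in>S. F s s' \<and> r s' < r s"
    and rw: "r w = 0"
    and cm: "\<And>s. s \<in> S \<Longrightarrow> c s \<ge> m" and cw: "c w \<ge> M" and m0: "m > 0" and Mm: "M \<ge> m"
  shows "finite T \<Longrightarrow> T \<subseteq> S \<Longrightarrow> w \<in> T \<Longrightarrow> down_closed S r T \<Longrightarrow>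
    (\<Sum>s\<in>T. \<Sum>t\<in>T. c s * c t * real (gdist (induced_rel F T) s t))
      \<le> 2 * (wiener_potential m M (\<Sum>s\<in>T. c s) - wiener_potential m M M)"
proof (induction "card T" arbitrary: T rule: less_induct)
  case less
  note T = less.prems
  show ?case
  proof (cases "T = {w}")
    case True
    then show ?thesis using wiener_potential_le[OF cw Mm m0] by simp
  next
    case False
    define G where "G = induced_rel F T"
    have "Max (r ` (T - {w})) \<in> r ` (T - {w})" using T(1,3) False by (intro Max_in) auto
    then obtain v where "v \<in> T - {w}" and v_Max: "r v = Max (r ` (T - {w}))" by (metis imageE)
    then have v: "v \<in> T" "v \<noteq> w" by auto
    have v_max: "r t \<le> r v" if "t \<in> T" for t
      using that T(1) rw by (cases "t = w") (auto simp: v_Max)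
    define T' where "T' = T - {v}"
    have T': "finite T'" "T' \<subseteq> S" "w \<in> T'" "down_closed S r T'"
      using T v down_closed_Diff_max[OF T(4) v_max] unfolding T'_def by auto
    have IH: "(\<Sum>s\<in>T'. \<Sum>t\<in>T'. c s * c t * real (gdist (induced_rel F T') s t))
        \<le> 2 * (wiener_potential m M (\<Sum>s\<in>T'. c s) - wiener_potential m M M)"
      using less.hyps[OF _ T'] card_Diff1_less[OF T(1) v(1)] unfolding T'_def by blast
    have c0: "c s \<ge> 0" if "s \<in> S" for s using cm[OF that] m0 by linarith
    have G_sym: "gdist G s t = gdist G t s" for s t
      unfolding G_def using gdist_sym induced_rel_sym[of F T] F_sym by metis
    have "(\<Sum>s\<in>T'. \<Sum>t\<in>T'. c s * c t * real (gdist G s t))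
        \<le> (\<Sum>s\<in>T'. \<Sum>t\<in>T'. c s * c t * real (gdist (induced_rel F T') s t))"
    proof (intro sum_mono)
      fix s t assume st: "s \<in> T'" "t \<in> T'"
      obtain k where "walk_betw (induced_rel F T') s t k"
        using walk_betw_induced_rel[OF F_sym parent T'(2-4) st] by blast
      then have "gdist G s t \<le> gdist (induced_rel F T') s t"
        unfolding G_def by (rule gdist_antimono[rotated]) (auto simp: induced_rel_def T'_def)
      then show "c s * c t * real (gdist G s t) \<le> c s * c t * real (gdist (induced_rel F T') s t)"
        using c0 st T'(2) by (intro mult_left_mono) (auto intro: mult_nonneg_nonneg)
    qed
    moreover have "(\<Sum>t\<in>T'. c t * real (gdist G v t)) \<le> dist_sum_bound m M (\<Sum>t\<in>T'. c t)"
      unfolding T'_def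
    proof (rule weighted_dist_sum_le[where G = G and c = c, OF T(1) v(1) T(3) v(2)[symmetric] _ _ _ cw m0 Mm])
      show "\<And>x y. G x y \<Longrightarrow> y \<in> T" unfolding G_def induced_rel_def by blast
      show "\<And>t. t \<in> T \<Longrightarrow> \<exists>k. walk_betw G v t k"
        unfolding G_def using walk_betw_induced_rel[OF F_sym parent T(2,3,4) v(1)] by blast
    qed (use cm T(2) in auto)
    moreover have "c v * dist_sum_bound m M (\<Sum>t\<in>T'. c t)
        \<le> wiener_potential m M ((\<Sum>t\<in>T'. c t) + c v) - wiener_potential m M (\<Sum>t\<in>T'. c t)"
      using wiener_potential_increment sum_nonneg cm c0 T(2) T'(2) v(1) m0 by (metis subsetD)
    moreover have "(\<Sum>s\<in>T. c s) = (\<Sum>t\<in>T'. c t) + c v"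
      unfolding T'_def using sum.remove[OF T(1) v(1), of c] by simp
    moreover have "(\<Sum>s\<in>T. \<Sum>t\<in>T. c s * c t * real (gdist G s t))
        = (\<Sum>s\<in>T'. \<Sum>t\<in>T'. c s * c t * real (gdist G s t)) + 2 * (c v * (\<Sum>t\<in>T'. c t * real (gdist G v t)))"
      unfolding T'_def by (subst double_sum_remove[OF T(1) v(1)]) (auto simp: G_sym sum_distrib_left mult.assoc)
    moreover have "c v \<ge> 0" using c0 v(1) T(2) by blast
    ultimately show ?thesis unfolding G_def using IH
      by (smt (verit, ccfv_threshold) mult_left_mono)
  qed
qed

lemma wiener_potential_difference_le:
  fixes n d D :: real
  assumes "n \<ge> D + 1" "D \<ge> d" "d \<ge> 3"
  shows "6 * (wiener_potential (d+1) (D+1) n - wiener_potential (d+1) (D+1) (D+1))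
      \<le> (n - D + d) * (n - D + d - 1) * (n + 2 * D) / (d + 1)"
proof -
  have P6: "6 * (d+1) * wiener_potential (d+1) (D+1) x
      = x^3 + 3*((d+1)*(D+1) - (D+1)^2)*x - (d+1)^2*x" for x
    unfolding wiener_potential_def using assms by (simp add: field_simps power2_eq_square power3_eq_cube)
  define u where "u = n - D - 1"
  have "u \<ge> 0" using assms unfolding u_def by simp
  have "(n - D + d) * (n - D + d - 1) * (n + 2 * D)
        - (d + 1) * (6 * (wiener_potential (d+1) (D+1) n - wiener_potential (d+1) (D+1) (D+1)))
      = (n - D + d) * (n - D + d - 1) * (n + 2 * D)
        - (6 * (d+1) * wiener_potential (d+1) (D+1) n - 6 * (d+1) * wiener_potential (d+1) (D+1) (D+1))"
    by (simp add: algebra_simps)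
  also have "\<dots> = (2*d - 1)*u^2 + (3*(D+1)*d + (2*d + 1)*(d - 1))*u + (d+1)*d*(3*D + 1)"
    unfolding P6 u_def by (simp add: algebra_simps power2_eq_square power3_eq_cube)
  also have "\<dots> \<ge> 0" using assms \<open>u \<ge> 0\<close> by simp
  finally show ?thesis using assms by (simp add: field_simps)
qed

section \<open>Dominating packings\<close>

lemma sum_powers_less:
  fixes B :: nat
  assumes "finite T" "card T < B" "\<And>s. s \<in> T \<Longrightarrow> e s < e0"
  shows "(\<Sum>s\<in>T. B ^ e s) < B ^ e0"
proof (cases "T = {}")
  case True then show ?thesis using assms(2) by simp
next
  case False
  then have "e0 = Suc (e0 - 1)" using assms(3) by fastforce
  have "B ^ e s \<le> B ^ (e0 - 1)" if "s \<in> T" for s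
    using assms(2) assms(3)[OF that] by (intro power_increasing) auto
  then have "(\<Sum>s\<in>T. B ^ e s) \<le> card T * B ^ (e0 - 1)"
    using sum_bounded_above[of T "\<lambda>s. B ^ e s" "B ^ (e0 - 1)"] by simp
  also have "\<dots> < B * B ^ (e0 - 1)" using assms(2) by simp
  also have "\<dots> = B ^ e0" by (subst \<open>e0 = Suc (e0 - 1)\<close>) simp
  finally show ?thesis .
qed

text \<open>Since \<open>B > card V\<close>, a maximiser of \<open>\<Sum>s\<in>S. B ^ (R - r s)\<close> prefers elements of small
  rank \<open>r\<close> lexicographically. If a vertex \<open>v\<close> had no element of \<open>S\<close> of rank at most \<open>r v\<close>
  within distance 2, exchanging the elements of \<open>S\<close> near \<open>v\<close> for \<open>v\<close> itself would increase
  the potential.\<close>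
lemma packing_exists:
  fixes dd :: "'a \<Rightarrow> 'a \<Rightarrow> nat" and r :: "'a \<Rightarrow> nat"
  assumes fin: "finite V" and wV: "w \<in> V" and dsym: "\<And>x y. dd x y = dd y x"
    and dself: "\<And>x. dd x x = 0" and rw: "r w = 0"
  shows "\<exists>S. S \<subseteq> V \<and> w \<in> S \<and> (\<forall>s\<in>S. \<forall>t\<in>S. s \<noteq> t \<longrightarrow> dd s t \<ge> 3)
             \<and> (\<forall>v\<in>V. \<exists>s\<in>S. dd v s \<le> 2 \<and> r s \<le> r v)"
proof -
  define R where "R = Max (r ` V)"
  define B where "B = card V + 1"
  define pot where "pot S = (\<Sum>s\<in>S. B ^ (R - r s))" for S
  define P where "P S \<longleftrightarrow> S \<subseteq> V \<and> w \<in> S \<and> (\<forall>s\<in>S. \<forall>t\<in>S. s \<noteq> t \<longrightarrow> dd s t \<ge> 3)" for S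
  have "P {w}" unfolding P_def using wV by auto
  moreover have "pot S < pot V + 1" if "P S" for S
    using that sum_mono2[OF fin, of S "\<lambda>s. B ^ (R - r s)"] unfolding pot_def P_def by simp
  ultimately obtain S where PS: "P S" and S_max: "\<And>S'. P S' \<Longrightarrow> pot S' \<le> pot S"
    using ex_has_greatest_nat[of P "{w}" pot "pot V + 1"] by blast
  have SV: "S \<subseteq> V" and wS: "w \<in> S" and sep: "\<forall>s\<in>S. \<forall>t\<in>S. s \<noteq> t \<longrightarrow> dd s t \<ge> 3"
    using PS unfolding P_def by auto
  have finS: "finite S" using SV fin finite_subset by blast
  have "\<forall>v\<in>V. \<exists>s\<in>S. dd v s \<le> 2 \<and> r s \<le> r v"
  proof (rule ccontr)
    assume "\<not> ?thesis"
    then obtain v where vV: "v \<in> V" and far: "\<And>s. s \<in> S \<Longrightarrow> dd v s \<le> 2 \<Longrightarrow> r v < r s"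
      by (meson not_le)
    define T where "T = {s \<in> S. dd v s \<le> 2}"
    have TS: "T \<subseteq> S" unfolding T_def by auto
    have "P (insert v (S - T))" unfolding P_def
    proof (intro conjI ballI impI)
      show "insert v (S - T) \<subseteq> V" using SV vV by auto
      show "w \<in> insert v (S - T)" using wS far rw unfolding T_def by fastforce
    next
      fix s t assume "s \<in> insert v (S - T)" "t \<in> insert v (S - T)" "s \<noteq> t"
      then show "dd s t \<ge> 3" using sep dsym unfolding T_def by (auto simp: not_le)
    qed
    moreover have "pot (insert v (S - T)) = B ^ (R - r v) + pot (S - T)"
      unfolding pot_def using finS dself unfolding T_def by simp
    moreover have "pot S = pot T + pot (S - T)"
      unfolding pot_def using sum.subset_diff[OF TS finS] by (simp add: add.commute)
    moreover have "pot T < B ^ (R - r v)" unfolding pot_def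
    proof (rule sum_powers_less)
      show "finite T" using finS TS finite_subset by blast
      show "card T < B" using card_mono[OF fin] TS SV unfolding B_def by (metis Suc_eq_plus1 dual_order.trans le_imp_less_Suc)
      show "R - r s < R - r v" if "s \<in> T" for s
      proof -
        have "s \<in> V" "r v < r s" using that far SV unfolding T_def by auto
        moreover have "r s \<le> R" using \<open>s \<in> V\<close> fin unfolding R_def by simp
        ultimately show ?thesis by linarith
      qed
    qed
    ultimately show False using S_max by fastforce
  qed
  then show ?thesis using SV wS sep by blast
qed

section \<open>Clusters around the centres of a packing\<close>

locale connected_simple_graph =
  fixes V :: "'a set" and E :: "'a \<Rightarrow> 'a \<Rightarrow> bool"
  assumes simple: "simple_graph V E" and connected: "connected_graph V E"
begin

lemma finite_V: "finite V"
  and edge_in_V: "E u v \<Longrightarrow> u \<in> V \<and> v \<in> V"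
  and edge_sym: "E u v \<Longrightarrow> E v u"
  and edge_irrefl: "\<not> E v v"
  using simple unfolding simple_graph_def by blast+

lemma V_nonempty: "V \<noteq> {}"
  and reachable: "u \<in> V \<Longrightarrow> v \<in> V \<Longrightarrow> \<exists>k. walk_betw E u v k"
  using connected unfolding connected_graph_def by blast+

lemma dist_sym: "gdist E u v = gdist E v u"
  by (rule gdist_sym) (rule edge_sym)

lemma dist_triangle: "u \<in> V \<Longrightarrow> v \<in> V \<Longrightarrow> x \<in> V \<Longrightarrow> gdist E u x \<le> gdist E u v + gdist E v x"
  by (meson gdist_triangle reachable)

lemma dist_eq_0D: "u \<in> V \<Longrightarrow> v \<in> V \<Longrightarrow> gdist E u v = 0 \<Longrightarrow> u = v"
  by (meson gdist_eq_0D reachable)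

lemma min_degree_le: "v \<in> V \<Longrightarrow> min_degree V E \<le> degree V E v"
  unfolding min_degree_def using finite_V by simp

lemma max_degree_attained: "\<exists>w\<in>V. degree V E w = max_degree V E"
  unfolding max_degree_def using Max_in[of "degree V E ` V"] finite_V V_nonempty by fastforce

lemma degree_less_card: "v \<in> V \<Longrightarrow> degree V E v < card V"
  unfolding degree_def using finite_V edge_irrefl
  by (intro psubset_card_mono) auto

end

locale dominating_packing = connected_simple_graph +
  fixes S :: "'a set" and w :: 'a
  assumes packing_subset: "S \<subseteq> V" and root_in: "w \<in> S"
    and separated: "\<And>s t. s \<in> S \<Longrightarrow> t \<in> S \<Longrightarrow> s \<noteq> t \<Longrightarrow> 3 \<le> gdist E s t"
    and dominating: "\<And>v. v \<in> V \<Longrightarrow> \<exists>s\<in>S. gdist E v s \<le> 2 \<and> gdist E w s \<le> gdist E w v"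
begin

definition centre :: "'a \<Rightarrow> 'a" where
  "centre x = arg_min_on (gdist E x) S"

definition cluster_size :: "'a \<Rightarrow> real" where
  "cluster_size s = real (card {x \<in> V. centre x = s})"

definition cluster_adj :: "'a \<Rightarrow> 'a \<Rightarrow> bool" where
  "cluster_adj s t \<longleftrightarrow> s \<in> S \<and> t \<in> S \<and> s \<noteq> t \<and> gdist E s t \<le> 3"

lemma finite_S: "finite S"
  using packing_subset finite_V finite_subset by blast

lemma centre_in: "centre x \<in> S"
  unfolding centre_def using arg_min_if_finite(1)[OF finite_S] root_in by auto

lemma dist_centre_le: "t \<in> S \<Longrightarrow> gdist E x (centre x) \<le> gdist E x t"
  unfolding centre_def by (rule arg_min_least[OF finite_S]) auto

lemma dist_centre: "x \<in> V \<Longrightarrow> gdist E x (centre x) \<le> 2"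
  using dominating dist_centre_le le_trans by meson

lemma centre_eqI:
  assumes "s \<in> S" "x = s \<or> E s x"
  shows "centre x = s"
proof (rule ccontr)
  assume "centre x \<noteq> s"
  have "s \<in> V" "x \<in> V" using assms packing_subset edge_in_V by auto
  have "gdist E x s \<le> 1" using assms(2) gdist_edge_le dist_sym by fastforce
  then have "gdist E x (centre x) \<le> 1" using dist_centre_le[OF assms(1), of x] by linarith
  moreover have "gdist E s (centre x) \<le> gdist E s x + gdist E x (centre x)"
    using dist_triangle \<open>s \<in> V\<close> \<open>x \<in> V\<close> centre_in packing_subset by blast
  ultimately have "gdist E s (centre x) \<le> 2" using \<open>gdist E x s \<le> 1\<close> dist_sym by fastforce
  then show False using separated[OF assms(1) centre_in] \<open>centre x \<noteq> s\<close> by fastforce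
qed

lemma degree_less_cluster_size: "s \<in> S \<Longrightarrow> real (degree V E s) + 1 \<le> cluster_size s"
proof -
  assume "s \<in> S"
  then have "insert s {x \<in> V. E s x} \<subseteq> {x \<in> V. centre x = s}"
    using centre_eqI packing_subset by auto
  then have "card (insert s {x \<in> V. E s x}) \<le> card {x \<in> V. centre x = s}"
    using finite_V by (intro card_mono) auto
  then show ?thesis unfolding cluster_size_def degree_def using finite_V edge_irrefl by simp
qed

lemma sum_centre: "(\<Sum>x\<in>V. h (centre x)) = (\<Sum>s\<in>S. cluster_size s * h s)"
proof -
  have "(\<Sum>x\<in>V. h (centre x)) = (\<Sum>s\<in>S. \<Sum>x\<in>{x \<in> V. centre x = s}. h (centre x))"
    using sum.group[OF finite_V finite_S, of centre "\<lambda>x. h (centre x)"] centre_in by fastforce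
  also have "\<dots> = (\<Sum>s\<in>S. cluster_size s * h s)"
    unfolding cluster_size_def by (rule sum.cong) auto
  finally show ?thesis .
qed

lemma sum_cluster_size: "(\<Sum>s\<in>S. cluster_size s) = real (card V)"
  using sum_centre[of "\<lambda>_. 1"] by simp

lemma cluster_adj_sym: "cluster_adj s t \<Longrightarrow> cluster_adj t s"
  unfolding cluster_adj_def by (auto simp: dist_sym)

text \<open>The parent is a centre dominating the predecessor of \<open>s\<close> on a shortest walk from \<open>w\<close>.\<close>
lemma cluster_parent:
  assumes "s \<in> S" "s \<noteq> w"
  shows "\<exists>s'\<in>S. cluster_adj s s' \<and> gdist E w s' < gdist E w s"
proof -
  have "s \<in> V" "w \<in> V" using assms root_in packing_subset by auto
  then obtain k where "walk_betw E w s k" using reachable by blast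
  then have walk: "walk_betw E w s (gdist E w s)" by (rule walk_betw_gdist)
  obtain j where j: "gdist E w s = Suc j"
    using dist_eq_0D[OF \<open>w \<in> V\<close> \<open>s \<in> V\<close>] assms(2) by (cases "gdist E w s") auto
  obtain p where p: "walk_betw E w p j" "walk_betw E p s 1"
    using walk_betw_split[OF walk, of j] j by auto
  have "E s p" using p(2) edge_sym by (simp add: walk_betw_Suc walk_betw_0)
  then have "p \<in> V" "gdist E s p \<le> 1" using edge_in_V gdist_edge_le by simp_all
  obtain s' where s': "s' \<in> S" "gdist E p s' \<le> 2" "gdist E w s' \<le> gdist E w p"
    using dominating[OF \<open>p \<in> V\<close>] by blast
  have "gdist E s s' \<le> gdist E s p + gdist E p s'"
    using dist_triangle \<open>s \<in> V\<close> \<open>p \<in> V\<close> s'(1) packing_subset by blast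
  then have "gdist E s s' \<le> 3" using s'(2) \<open>gdist E s p \<le> 1\<close> by linarith
  moreover have "gdist E w s' < gdist E w s" using gdist_le[OF p(1)] s'(3) j by linarith
  ultimately show ?thesis unfolding cluster_adj_def using s'(1) assms(1) by auto
qed

lemma induced_rel_cluster_adj: "induced_rel cluster_adj S = cluster_adj"
  unfolding induced_rel_def cluster_adj_def by blast

lemma dist_le_cluster_walk: "walk_betw cluster_adj s t k \<Longrightarrow> s \<in> S \<Longrightarrow> t \<in> S \<Longrightarrow> gdist E s t \<le> 3 * k"
proof (induction k arbitrary: s)
  case 0 then show ?case by (simp add: walk_betw_0)
next
  case (Suc k)
  then obtain x where x: "cluster_adj s x" "walk_betw cluster_adj x t k" by (auto simp: walk_betw_Suc)
  then have "x \<in> S" "gdist E s x \<le> 3" unfolding cluster_adj_def by auto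
  moreover have "gdist E s t \<le> gdist E s x + gdist E x t"
    using dist_triangle Suc.prems \<open>x \<in> S\<close> packing_subset by blast
  ultimately show ?case using Suc.IH[OF x(2)] Suc.prems by simp
qed

lemma cluster_walk: "s \<in> S \<Longrightarrow> t \<in> S \<Longrightarrow> \<exists>k. walk_betw cluster_adj s t k"
  using walk_betw_induced_rel[of cluster_adj S w "gdist E w" S] cluster_adj_sym cluster_parent
    root_in induced_rel_cluster_adj unfolding down_closed_def by auto

lemma dist_le_centre_dist:
  assumes "x \<in> V" "y \<in> V"
  shows "gdist E x y \<le> 4 + 3 * gdist cluster_adj (centre x) (centre y)"
proof -
  have cV: "centre x \<in> V" "centre y \<in> V" using centre_in packing_subset by auto
  have "gdist E x y \<le> gdist E x (centre x) + gdist E (centre x) (centre y) + gdist E (centre y) y"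
    using dist_triangle[OF assms(1) cV(1) assms(2)] dist_triangle[OF cV assms(2)] by linarith
  moreover obtain k where "walk_betw cluster_adj (centre x) (centre y) k"
    using cluster_walk[OF centre_in centre_in] by blast
  then have "gdist E (centre x) (centre y) \<le> 3 * gdist cluster_adj (centre x) (centre y)"
    using dist_le_cluster_walk[OF walk_betw_gdist] centre_in by blast
  moreover have "gdist E (centre y) y \<le> 2" using dist_centre[OF assms(2)] dist_sym by simp
  ultimately show ?thesis using dist_centre[OF assms(1)] by linarith
qed

end

context dominating_packing
begin

lemma ordered_wiener_le:
  "(\<Sum>u\<in>V. \<Sum>v\<in>V-{u}. real (gdist E u v))
    \<le> 4 * real (card V) * (real (card V) - 1)
      + 3 * (\<Sum>s\<in>S. \<Sum>t\<in>S. cluster_size s * cluster_size t * real (gdist cluster_adj s t))"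
proof -
  let ?D = "\<lambda>u v. real (gdist cluster_adj (centre u) (centre v))"
  have "(\<Sum>u\<in>V. \<Sum>v\<in>V-{u}. real (gdist E u v)) \<le> (\<Sum>u\<in>V. \<Sum>v\<in>V-{u}. 4 + 3 * ?D u v)"
  proof (intro sum_mono)
    fix u v assume "u \<in> V" "v \<in> V - {u}"
    then have "gdist E u v \<le> 4 + 3 * gdist cluster_adj (centre u) (centre v)"
      by (intro dist_le_centre_dist) auto
    then show "real (gdist E u v) \<le> 4 + 3 * ?D u v" using of_nat_mono by fastforce
  qed
  also have "\<dots> = (\<Sum>u\<in>V. 4 * (real (card V) - 1) + 3 * (\<Sum>v\<in>V-{u}. ?D u v))"
    using finite_V card_gt_0_iff[of V] V_nonempty
    by (intro sum.cong) (auto simp: sum.distrib sum_distrib_left card_Diff_singleton of_nat_diff)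
  also have "\<dots> = 4 * real (card V) * (real (card V) - 1) + 3 * (\<Sum>u\<in>V. \<Sum>v\<in>V-{u}. ?D u v)"
    by (simp add: sum.distrib sum_distrib_left)
  also have "(\<Sum>u\<in>V. \<Sum>v\<in>V-{u}. ?D u v) \<le> (\<Sum>u\<in>V. \<Sum>v\<in>V. ?D u v)"
    using finite_V by (intro sum_mono sum_mono2) auto
  also have "\<dots> = (\<Sum>u\<in>V. \<Sum>t\<in>S. cluster_size t * real (gdist cluster_adj (centre u) t))"
    by (rule sum.cong[OF refl], rule sum_centre)
  also have "\<dots> = (\<Sum>s\<in>S. cluster_size s * (\<Sum>t\<in>S. cluster_size t * real (gdist cluster_adj s t)))"
    by (rule sum_centre)
  also have "\<dots> = (\<Sum>s\<in>S. \<Sum>t\<in>S. cluster_size s * cluster_size t * real (gdist cluster_adj s t))"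
    by (simp add: sum_distrib_left mult.assoc)
  finally show ?thesis by simp
qed

lemma cluster_wiener_le:
  "(\<Sum>s\<in>S. \<Sum>t\<in>S. cluster_size s * cluster_size t * real (gdist cluster_adj s t))
    \<le> 2 * (wiener_potential (real (min_degree V E) + 1) (real (degree V E w) + 1) (real (card V))
       - wiener_potential (real (min_degree V E) + 1) (real (degree V E w) + 1) (real (degree V E w) + 1))"
proof -
  let ?m = "real (min_degree V E) + 1" and ?M = "real (degree V E w) + 1"
  have "(\<Sum>s\<in>S. \<Sum>t\<in>S. cluster_size s * cluster_size t * real (gdist (induced_rel cluster_adj S) s t))
    \<le> 2 * (wiener_potential ?m ?M (\<Sum>s\<in>S. cluster_size s) - wiener_potential ?m ?M ?M)"
  proof (rule weighted_wiener_le_potential[where S = S and w = w and r = "gdist E w"])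
    show "cluster_size s \<ge> ?m" if "s \<in> S" for s
      using degree_less_cluster_size[OF that] min_degree_le[of s] that packing_subset by fastforce
    show "?m \<le> ?M"
      using min_degree_le root_in packing_subset by auto
    show "down_closed S (gdist E w) S" unfolding down_closed_def by blast
  qed (use cluster_adj_sym cluster_parent degree_less_cluster_size[OF root_in] finite_S root_in in auto)
  then show ?thesis by (simp add: induced_rel_cluster_adj sum_cluster_size)
qed

end

lemma avg_dist_eq:
  "avg_dist V E = (\<Sum>u\<in>V. \<Sum>v\<in>V-{u}. real (gdist E u v)) / (real (card V) * (real (card V) - 1))"
proof -
  have "real (card V choose 2) = real (card V) * (real (card V) - 1) / 2"
    by (cases "card V") (auto simp: choose_two real_of_nat_div algebra_simps)
  then show ?thesis unfolding avg_dist_def wiener_def by simp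
qed

theorem theorem4p1:
  fixes V :: "'a set" and E :: "'a \<Rightarrow> 'a \<Rightarrow> bool"
  assumes "simple_graph V E" and "connected_graph V E"
    and "min_degree V E \<ge> 3"
  shows "avg_dist V E \<le>
    (let n = real (card V); \<delta> = real (min_degree V E); \<Delta> = real (max_degree V E);
         N = n - \<Delta> + \<delta>
     in N * (N - 1) / (n * (n - 1)) * ((n + 2 * \<Delta>) / (\<delta> + 1)) + 4)"
proof -
  interpret G: connected_simple_graph V E using assms(1,2) by unfold_locales
  obtain w where w: "w \<in> V" "degree V E w = max_degree V E" using G.max_degree_attained by blast
  obtain S where "S \<subseteq> V" "w \<in> S" "\<forall>s\<in>S. \<forall>t\<in>S. s \<noteq> t \<longrightarrow> gdist E s t \<ge> 3"
    "\<forall>v\<in>V. \<exists>s\<in>S. gdist E v s \<le> 2 \<and> gdist E w s \<le> gdist E w v"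
    using packing_exists[OF G.finite_V w(1), of "gdist E" "gdist E w"] G.dist_sym by auto
  then interpret P: dominating_packing V E S w by unfold_locales auto
  define n \<delta> \<Delta> where "n = real (card V)" and "\<delta> = real (min_degree V E)" and "\<Delta> = real (max_degree V E)"
  have "n \<ge> \<Delta> + 1" "\<Delta> \<ge> \<delta>" "\<delta> \<ge> 3"
    using G.degree_less_card[OF w(1)] G.min_degree_le[OF w(1)] assms(3) w(2)
    unfolding n_def \<delta>_def \<Delta>_def by auto
  define K where "K = (n - \<Delta> + \<delta>) * (n - \<Delta> + \<delta> - 1) * (n + 2 * \<Delta>) / (\<delta> + 1)"
  have "6 * (wiener_potential (\<delta> + 1) (\<Delta> + 1) n - wiener_potential (\<delta> + 1) (\<Delta> + 1) (\<Delta> + 1)) \<le> K"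
    unfolding K_def by (rule wiener_potential_difference_le) fact+
  then have W: "(\<Sum>u\<in>V. \<Sum>v\<in>V-{u}. real (gdist E u v)) \<le> 4 * (n * (n - 1)) + K"
    using P.ordered_wiener_le P.cluster_wiener_le unfolding w(2) n_def \<delta>_def \<Delta>_def by linarith
  define X where "X = n * (n - 1)"
  have "X > 0" unfolding X_def using \<open>n \<ge> \<Delta> + 1\<close> \<open>\<Delta> \<ge> \<delta>\<close> \<open>\<delta> \<ge> 3\<close> by simp
  then have "avg_dist V E \<le> (4 * X + K) / X"
    unfolding avg_dist_eq n_def[symmetric] X_def using W by (simp add: divide_right_mono)
  also have "\<dots> = K / X + 4" using \<open>X > 0\<close> by (simp add: field_simps)
  finally show ?thesis unfolding K_def X_def Let_def n_def \<delta>_def \<Delta>_def by (simp add: field_simps)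
qed

end
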